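(* Let $\gamma$ be continuous, increasing and concave near the origin, with $\lim_{x\downarrow0}\gamma(x)=0$, and assume $\mathrm{ind}_*(\gamma)>0$. Then $\gamma$ satisfies Condition $(\mathbf{C_{0+}})$: for every $\varepsilon\in(0,1)$ there exist constants $\mathsf{c}_\varepsilon>0$ and $x_\varepsilon>0$ such that $$\int_0^{1/2}\gamma(xy)\frac{dy}{y\sqrt{\log(1/y)}}\le \mathsf{c}_\varepsilon\,(\gamma(x))^{1-\varepsilon}\quad\text{for all }0<x<x_\varepsilon .$$
   Context: $\mathrm{ind}_*(\gamma):=\sup\{\alpha:\gamma(x)=o(x^\alpha)\text{ as }x\downarrow0\}$. *)

theory Defs
  imports "HOL-Analysis.Analysis" "HOL-Library.Landau_Symbols"
begin

definition lower_index :: "(real \<Rightarrow> real) \<Rightarrow> ereal" where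
  "lower_index \<gamma> = (SUP \<alpha> \<in> {\<alpha>::real. \<gamma> \<in> o[at_right 0](\<lambda>x. x powr \<alpha>)}. ereal \<alpha>)"

end

theory Submission
  imports Defs
begin

text \<open>Since \<open>ind\<^sub>*(\<gamma>) > 0\<close>, there is \<open>\<alpha> > 0\<close> with \<open>0 \<le> \<gamma>(u) \<le> u\<^sup>\<alpha>\<close> near \<open>0\<close>.
  Interpolating between this bound and monotonicity \<open>\<gamma>(xy) \<le> \<gamma>(x)\<close> gives
  \<open>\<gamma>(xy) \<le> \<gamma>(x)\<^bsup>1-\<epsilon>\<^esup> (xy)\<^bsup>\<alpha>\<epsilon>\<^esup> \<le> \<gamma>(x)\<^bsup>1-\<epsilon>\<^esup> y\<^bsup>\<alpha>\<epsilon>\<^esup>\<close> for \<open>x \<le> 1\<close>, while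
  \<open>1/\<surd>log(1/y) \<le> 1/\<surd>log 2\<close> on \<open>(0, 1/2]\<close>; the remaining integral \<open>\<integral>\<^sub>0\<^sup>1 y\<^bsup>\<alpha>\<epsilon>-1\<^esup> dy = 1/(\<alpha>\<epsilon>)\<close>
  is finite.\<close>

lemma lower_index_gt_imp_smallo_powr:
  assumes "lower_index \<gamma> > ereal a"
  obtains \<alpha> where "\<alpha> > a" "\<gamma> \<in> o[at_right 0](\<lambda>x. x powr \<alpha>)"
  using assms unfolding lower_index_def by (auto simp: less_SUP_iff)

lemma smallo_powr_imp_le_powr_near_0:
  assumes "\<gamma> \<in> o[at_right 0](\<lambda>x. x powr \<alpha>)"
  obtains \<eta> :: real where "\<eta> > 0" "\<And>u. 0 < u \<Longrightarrow> u < \<eta> \<Longrightarrow> \<gamma> u \<le> u powr \<alpha>"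
proof -
  have "\<forall>\<^sub>F u in at_right 0. norm (\<gamma> u) \<le> 1 * norm (u powr \<alpha>)"
    using landau_o.smallD[OF assms, of 1] by simp
  then obtain \<eta> where "\<eta> > 0" "\<And>u. 0 < u \<Longrightarrow> u < \<eta> \<Longrightarrow> \<bar>\<gamma> u\<bar> \<le> u powr \<alpha>"
    unfolding eventually_at_right_field by auto
  then show thesis using that by force
qed

lemma mono_on_tendsto_0_imp_nonneg:
  fixes \<gamma> :: "real \<Rightarrow> real"
  assumes "mono_on {0<..<\<delta>} \<gamma>" "(\<gamma> \<longlongrightarrow> 0) (at_right 0)" "0 < u" "u < \<delta>"
  shows "0 \<le> \<gamma> u"
proof (rule tendsto_upperbound[OF assms(2)])
  show "\<forall>\<^sub>F v in at_right 0. \<gamma> v \<le> \<gamma> u"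
    unfolding eventually_at_right_field using assms(3,4)
    by (intro exI[of _ u]) (auto intro!: mono_onD[OF assms(1)])
qed simp

lemma le_powr_interpolate:
  fixes g a b \<theta> :: real
  assumes "0 \<le> g" "g \<le> a" "g \<le> b" "0 \<le> \<theta>" "\<theta> \<le> 1"
  shows "g \<le> a powr (1 - \<theta>) * b powr \<theta>"
proof (cases "g = 0")
  case False
  then have "g > 0" using assms(1) by simp
  then have "g = g powr (1 - \<theta>) * g powr \<theta>"
    by (simp add: powr_add[symmetric])
  also have "\<dots> \<le> a powr (1 - \<theta>) * b powr \<theta>"
    using \<open>g > 0\<close> assms by (intro mult_mono powr_mono2) auto
  finally show ?thesis .
qed simp

lemma sqrt_ln_2_le_sqrt_ln_inverse:
  fixes y :: real
  assumes "0 < y" "y \<le> 1/2"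
  shows "sqrt (ln 2) \<le> sqrt (ln (1 / y))"
proof (rule real_sqrt_le_mono)
  have "ln y \<le> ln (1/2)" using assms by simp
  then show "ln 2 \<le> ln (1 / y)" using assms by (simp add: ln_div)
qed

lemma nn_set_integral_le_by_powr:
  fixes f :: "real \<Rightarrow> real" and A :: "real set"
  assumes "A \<subseteq> {0<..1}" "\<beta> > 0" "C \<ge> 0"
    and "\<And>y. y \<in> A \<Longrightarrow> f y \<le> C * y powr (\<beta> - 1)"
  shows "(\<integral>\<^sup>+ y \<in> A. ennreal (f y) \<partial>lborel) \<le> ennreal (C / \<beta>)"
proof -
  have "(\<integral>\<^sup>+ y \<in> A. ennreal (f y) \<partial>lborel)
      \<le> (\<integral>\<^sup>+ y. ennreal (C * y powr (\<beta> - 1)) * indicator {0..1} y \<partial>lborel)"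
    using assms(1,4) by (intro nn_integral_mono) (auto simp: indicator_def ennreal_leI)
  also have "\<dots> = ennreal (C * (1 powr (\<beta> - 1 + 1) / (\<beta> - 1 + 1)))"
    using assms(2,3)
    by (intro nn_integral_has_integral_lebesgue' has_integral_mult_right has_integral_powr_from_0)
       auto
  finally show ?thesis by simp
qed

lemma integrand_le_powr:
  fixes \<gamma> :: "real \<Rightarrow> real"
  assumes mono: "mono_on {0<..<\<delta>} \<gamma>"
    and bound: "\<And>u. 0 < u \<Longrightarrow> u < \<delta> \<Longrightarrow> 0 \<le> \<gamma> u \<and> \<gamma> u \<le> u powr \<alpha>"
    and "\<alpha> > 0" "0 \<le> \<epsilon>" "\<epsilon> \<le> 1" "0 < x" "x \<le> 1" "x < \<delta>" "0 < y" "y \<le> 1/2"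
  shows "\<gamma> (x * y) / (y * sqrt (ln (1 / y)))
           \<le> \<gamma> x powr (1 - \<epsilon>) / sqrt (ln 2) * y powr (\<alpha> * \<epsilon> - 1)"
proof -
  have xy: "0 < x * y" "x * y \<le> x"
    using assms(6-10) by (auto simp: mult_le_cancel_left1)
  then have "\<gamma> (x * y) \<le> \<gamma> x powr (1 - \<epsilon>) * ((x * y) powr \<alpha>) powr \<epsilon>"
    using assms(4,5,8) bound[of "x * y"]
    by (intro le_powr_interpolate mono_onD[OF mono]) auto
  also have "\<dots> = \<gamma> x powr (1 - \<epsilon>) * (x powr (\<alpha> * \<epsilon>) * y powr (\<alpha> * \<epsilon>))"
    using xy assms(6,9) by (simp add: powr_powr powr_mult)
  also have "\<dots> \<le> \<gamma> x powr (1 - \<epsilon>) * y powr (\<alpha> * \<epsilon>)"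
    using assms(3,4,6,7)
    by (intro mult_left_mono mult_left_le_one_le) (auto simp: powr_le1)
  finally have "\<gamma> (x * y) / (y * sqrt (ln (1 / y)))
      \<le> \<gamma> x powr (1 - \<epsilon>) * y powr (\<alpha> * \<epsilon>) / (y * sqrt (ln 2))"
    using assms(9,10) bound[OF xy(1)] xy sqrt_ln_2_le_sqrt_ln_inverse[of y] \<open>x < \<delta>\<close>
    by (intro frac_le mult_left_mono) auto
  also have "\<dots> = \<gamma> x powr (1 - \<epsilon>) / sqrt (ln 2) * y powr (\<alpha> * \<epsilon> - 1)"
    using assms(9) by (simp add: powr_diff field_simps)
  finally show ?thesis .
qed

theorem lemma3p1:
  fixes \<gamma> :: "real \<Rightarrow> real" and \<delta> :: real
  assumes "\<delta> > 0"
    and "continuous_on {0<..<\<delta>} \<gamma>"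
    and "mono_on {0<..<\<delta>} \<gamma>"
    and "concave_on {0<..<\<delta>} \<gamma>"
    and "(\<gamma> \<longlongrightarrow> 0) (at_right 0)"
    and "lower_index \<gamma> > 0"
  shows "\<forall>\<epsilon>::real. 0 < \<epsilon> \<and> \<epsilon> < 1 \<longrightarrow>
           (\<exists>c>0. \<exists>x\<^sub>\<epsilon>>0. \<forall>x. 0 < x \<and> x < x\<^sub>\<epsilon> \<longrightarrow>
              (\<integral>\<^sup>+ y \<in> {0<..1/2}. ennreal (\<gamma> (x * y) / (y * sqrt (ln (1 / y)))) \<partial>lborel)
                \<le> ennreal (c * (\<gamma> x) powr (1 - \<epsilon>)))"
proof (intro allI impI)
  fix \<epsilon> :: real
  assume \<epsilon>: "0 < \<epsilon> \<and> \<epsilon> < 1"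
  obtain \<alpha> where "\<alpha> > 0" and \<alpha>: "\<gamma> \<in> o[at_right 0](\<lambda>x. x powr \<alpha>)"
    using lower_index_gt_imp_smallo_powr[of 0 \<gamma>] assms(6) by (auto simp: zero_ereal_def)
  obtain \<eta> where "\<eta> > 0" and \<eta>: "\<And>u. 0 < u \<Longrightarrow> u < \<eta> \<Longrightarrow> \<gamma> u \<le> u powr \<alpha>"
    using smallo_powr_imp_le_powr_near_0[OF \<alpha>] by blast
  define x\<^sub>\<epsilon> where "x\<^sub>\<epsilon> = min 1 (min \<delta> \<eta>)"
  have mono: "mono_on {0<..<x\<^sub>\<epsilon>} \<gamma>"
    by (rule mono_on_subset[OF assms(3)]) (auto simp: x\<^sub>\<epsilon>_def)
  have bound: "0 \<le> \<gamma> u \<and> \<gamma> u \<le> u powr \<alpha>" if "0 < u" "u < x\<^sub>\<epsilon>" for u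
    using that \<eta> mono_on_tendsto_0_imp_nonneg[OF assms(3,5)] by (auto simp: x\<^sub>\<epsilon>_def)
  have "(\<integral>\<^sup>+ y \<in> {0<..1/2}. ennreal (\<gamma> (x * y) / (y * sqrt (ln (1 / y)))) \<partial>lborel)
          \<le> ennreal (1 / (sqrt (ln 2) * (\<alpha> * \<epsilon>)) * \<gamma> x powr (1 - \<epsilon>))"
    if "0 < x" "x < x\<^sub>\<epsilon>" for x
  proof -
    have "(\<integral>\<^sup>+ y \<in> {0<..1/2}. ennreal (\<gamma> (x * y) / (y * sqrt (ln (1 / y)))) \<partial>lborel)
        \<le> ennreal (\<gamma> x powr (1 - \<epsilon>) / sqrt (ln 2) / (\<alpha> * \<epsilon>))"
      using that \<epsilon> \<open>\<alpha> > 0\<close> mono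
      by (intro nn_set_integral_le_by_powr integrand_le_powr[of x\<^sub>\<epsilon>] bound)
        (auto simp: x\<^sub>\<epsilon>_def)
    then show ?thesis by simp
  qed
  moreover have "x\<^sub>\<epsilon> > 0" "1 / (sqrt (ln 2) * (\<alpha> * \<epsilon>)) > 0"
    using assms(1) \<open>\<eta> > 0\<close> \<open>\<alpha> > 0\<close> \<epsilon> by (auto simp: x\<^sub>\<epsilon>_def)
  ultimately show "\<exists>c>0. \<exists>x\<^sub>\<epsilon>>0. \<forall>x. 0 < x \<and> x < x\<^sub>\<epsilon> \<longrightarrow>
              (\<integral>\<^sup>+ y \<in> {0<..1/2}. ennreal (\<gamma> (x * y) / (y * sqrt (ln (1 / y)))) \<partial>lborel)
                \<le> ennreal (c * (\<gamma> x) powr (1 - \<epsilon>))"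
    by blast
qed

end
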